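(* Fix $a\in(0,\tfrac12)$. Suppose that for some $E\in(0,1]$ and some $\lambda\le\lambda_0:=-1+a$ the $\Theta$-flow described in the context has a saddles connector from $(0,0)$ to $(\pi,-\pi)$. Then for every $E'\in[0,E)$ the $\Theta$-flow with parameters $(E',\lambda)$ has a corridor $\mathcal K_1(E',\lambda)$ of winding number $0$.
   Context: For $a\in(0,\tfrac12)$, $E\in[0,1]$, $\lambda\in\mathbb R$, the $\Theta$-flow is the system on the strip $[0,\pi]\times\mathbb R$ (with $\Theta$ understood mod $2\pi$ on the cylinder) $$\dot\theta=\sin\theta,\qquad \dot\Theta=-2a\sin\theta\cos\theta\cos\Theta+2aE\sin^2\theta\sin\Theta-\sin\Theta+2\lambda\sin\theta.$$ Its equilibria are $(0,0)$, $(0,\pi)$ (left) and $(\pi,-\pi)$, $(\pi,0)$ (right), mod $2\pi$ in $\Theta$. Let $\widetilde{\mathcal W}^-$ be the unique orbit in $(0,\pi)\times\mathbb R$ with $\alpha$-limit $(0,0)$ and $\widetilde{\mathcal W}^+$ the unique orbit with $\omega$-limit $(\pi,-\pi)$. A saddles connector from $(0,0)$ to $(\pi,-\pi)$ is an orbit in the strip with $\alpha$-limit $(0,0)$ and $\omega$-limit $(\pi,-\pi)$ (i.e. $\widetilde{\mathcal W}^-=\widetilde{\mathcal W}^+$). The flow has a corridor $\mathcal K_1(E,\lambda)$ of winding number $k\in\mathbb Z$ if $\widetilde{\mathcal W}^-\neq\widetilde{\mathcal W}^+$ and the $\omega$-limit of $\widetilde{\mathcal W}^-$ is $(\pi,-2\pi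 k)$. *)

theory Defs
  imports "HOL-Analysis.Analysis"
begin

text \<open>Vector field of the Theta-flow, in lifted coordinates (theta, Theta) on [0,pi] x R.\<close>
definition theta_field :: "real \<Rightarrow> real \<Rightarrow> real \<Rightarrow> real \<times> real \<Rightarrow> real \<times> real" where
  "theta_field a E lam p = (let \<theta> = fst p; \<Theta> = snd p in
     (sin \<theta>,
      - 2 * a * sin \<theta> * cos \<theta> * cos \<Theta> + 2 * a * E * (sin \<theta>)\<^sup>2 * sin \<Theta>
      - sin \<Theta> + 2 * lam * sin \<theta>))"

definition strip_orbit :: "real \<Rightarrow> real \<Rightarrow> real \<Rightarrow> (real \<Rightarrow> real \<times> real) \<Rightarrow> bool" where
  "strip_orbit a E lam \<gamma> \<longleftrightarrow>
     (\<forall>t. (\<gamma> has_vector_derivative theta_field a E lam (\<gamma> t)) (at t)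
          \<and> 0 < fst (\<gamma> t) \<and> fst (\<gamma> t) < pi)"

definition alpha_lim :: "(real \<Rightarrow> real \<times> real) \<Rightarrow> real \<times> real \<Rightarrow> bool" where
  "alpha_lim \<gamma> p \<longleftrightarrow> (\<gamma> \<longlongrightarrow> p) at_bot"

definition omega_lim :: "(real \<Rightarrow> real \<times> real) \<Rightarrow> real \<times> real \<Rightarrow> bool" where
  "omega_lim \<gamma> p \<longleftrightarrow> (\<gamma> \<longlongrightarrow> p) at_top"

definition saddles_connector :: "real \<Rightarrow> real \<Rightarrow> real \<Rightarrow> bool" where
  "saddles_connector a E lam \<longleftrightarrow>
     (\<exists>\<gamma>. strip_orbit a E lam \<gamma> \<and> alpha_lim \<gamma> (0, 0) \<and> omega_lim \<gamma> (pi, - pi))"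

definition corridor_K1 :: "real \<Rightarrow> real \<Rightarrow> real \<Rightarrow> int \<Rightarrow> bool" where
  "corridor_K1 a E lam k \<longleftrightarrow>
     (\<exists>\<gamma>. strip_orbit a E lam \<gamma> \<and> alpha_lim \<gamma> (0, 0)) \<and>
     (\<forall>\<gamma>. strip_orbit a E lam \<gamma> \<and> alpha_lim \<gamma> (0, 0) \<longrightarrow>
        \<not> omega_lim \<gamma> (pi, - pi) \<and> omega_lim \<gamma> (pi, - 2 * pi * of_int k))"

end

theory Submission
  imports Defs
begin

text \<open>After a time shift every orbit in the strip has \<theta> = 2 arctan (exp t), so \<Theta> solves a scalar
  non-autonomous equation \<Theta>' = G (exp t, \<Theta>).  For \<lambda> < -1/2 the right-hand side is negative
  wherever sin \<Theta> \<ge> 0; this keeps the unstable orbit W- of (0,0) in \<Theta> < 0 and the connector in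
  (-\<pi>, 0).  Lowering E raises G where sin \<Theta> < 0, so near t = -\<infinity>, where G is antitone in \<Theta>,
  W-(E') starts above the connector and stays above it.  Near \<Theta> = -\<pi> the map \<Theta> \<mapsto> G is steep, so
  the gap between the two solutions grows until W-(E') leaves a neighbourhood of -\<pi>; for late times
  G is positive on [-\<pi> + 1/4, -\<eta>], hence \<Theta> \<rightarrow> 0 along W-(E').  The orbit W- itself is a fixed
  point of a contraction: in the time \<sigma> = exp t, \<Theta> is the running mean of \<Theta> + G (\<sigma>, \<Theta>).\<close>

section \<open>Sign arguments for scalar differential inequalities\<close>

lemma tendsto_at_botE:
  fixes f :: "real \<Rightarrow> real"
  assumes "(f \<longlongrightarrow> L) at_bot" "e > 0"
  obtains T where "\<And>t. t \<le> T \<Longrightarrow> \<bar>f t - L\<bar> < e"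
  using tendstoD[OF assms] unfolding eventually_at_bot_linorder dist_real_def by blast

lemma tendsto_at_topE:
  fixes f :: "real \<Rightarrow> real"
  assumes "(f \<longlongrightarrow> L) at_top" "e > 0"
  obtains T where "\<And>t. t \<ge> T \<Longrightarrow> \<bar>f t - L\<bar> < e"
  using tendstoD[OF assms] unfolding eventually_at_top_linorder dist_real_def by blast

lemma stays_negative:
  fixes f f' :: "real \<Rightarrow> real"
  assumes der: "\<And>x. x \<ge> a \<Longrightarrow> (f has_real_derivative f' x) (at x)"
    and fa: "f a < 0" and crossing: "\<And>x. x \<ge> a \<Longrightarrow> f x = 0 \<Longrightarrow> f' x < 0" and ab: "a \<le> b"
  shows "f b < 0"
proof (rule ccontr)
  assume "\<not> f b < 0"
  have cont: "continuous_on {a..b} f"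
    using der by (intro continuous_at_imp_continuous_on ballI DERIV_isCont) auto
  define S where "S = {a..b} \<inter> f -` {0..}"
  have "closed S" unfolding S_def by (rule continuous_closed_preimage[OF cont]) auto
  moreover have "b \<in> S" "bdd_below S"
    using ab \<open>\<not> f b < 0\<close> by (auto simp: S_def intro: bdd_belowI[of _ a])
  ultimately have zS: "Inf S \<in> S" and zle: "\<And>y. y \<in> S \<Longrightarrow> Inf S \<le> y"
    using closed_contains_Inf cInf_lower by blast+
  define z where "z = Inf S"
  have z: "a \<le> z" "z \<le> b" "f z \<ge> 0" using zS by (auto simp: S_def z_def)
  have "continuous_on {a..z} f" by (rule continuous_on_subset[OF cont]) (use z in auto)
  then obtain y where y: "a \<le> y" "y \<le> z" "f y = 0" using IVT'[of f a 0 z] fa z by auto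
  have "y \<in> S" using y z by (auto simp: S_def)
  hence yz: "y = z" using zle y by (force simp: z_def)
  have az: "a < z" using y yz fa by (cases "a = z") auto
  have "f' z < 0" using crossing[of z] y yz z by auto
  then obtain d where d: "d > 0" "\<And>h. h > 0 \<Longrightarrow> h < d \<Longrightarrow> f z < f (z - h)"
    using DERIV_neg_dec_left[OF der[of z]] z by auto
  define h where "h = min (d/2) ((z - a)/2)"
  have h: "h > 0" "h < d" "z - h \<ge> a" using d az by (auto simp: h_def min_def field_simps)
  have "z - h \<in> S" using d(2)[OF h(1,2)] y yz h z by (auto simp: S_def)
  thus False using zle h by (force simp: z_def)
qed

lemma stays_above:
  fixes f f' :: "real \<Rightarrow> real"
  assumes der: "\<And>x. x \<ge> a \<Longrightarrow> (f has_real_derivative f' x) (at x)"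
    and fa: "f a > c" and crossing: "\<And>x. x \<ge> a \<Longrightarrow> f x = c \<Longrightarrow> f' x > 0" and ab: "a \<le> b"
  shows "f b > c"
proof -
  have "c - f b < 0"
  proof (rule stays_negative[of a "\<lambda>x. c - f x" "\<lambda>x. - f' x"])
    show "((\<lambda>x. c - f x) has_real_derivative - f' x) (at x)" if "x \<ge> a" for x
      using DERIV_diff[OF DERIV_const der[OF that]] by simp
  qed (use fa crossing ab in auto)
  thus ?thesis by simp
qed

lemma stays_negative_from_nonpos:
  fixes f f' :: "real \<Rightarrow> real"
  assumes der: "\<And>x. x \<ge> a \<Longrightarrow> (f has_real_derivative f' x) (at x)"
    and fa: "f a \<le> 0" and crossing: "\<And>x. x \<ge> a \<Longrightarrow> f x = 0 \<Longrightarrow> f' x < 0" and ab: "a < b"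
  shows "f b < 0"
proof (cases "f a < 0")
  case True
  thus ?thesis using stays_negative[OF der _ crossing] ab by auto
next
  case False
  hence "f' a < 0" using fa crossing by auto
  then obtain d where d: "d > 0" "\<And>h. h > 0 \<Longrightarrow> h < d \<Longrightarrow> f (a + h) < f a"
    using DERIV_neg_dec_right[OF der[of a]] by auto
  define h where "h = min (d/2) (b - a)"
  have h: "0 < h" "h < d" "a + h \<le> b" using d ab by (auto simp: h_def)
  have "f (a + h) < 0" using d(2)[OF h(1,2)] fa by simp
  thus ?thesis using h by (intro stays_negative[of "a + h" f f' b] der crossing) auto
qed

lemma stays_negative_backward:
  fixes f f' :: "real \<Rightarrow> real"
  assumes der: "\<And>x. x \<le> b \<Longrightarrow> (f has_real_derivative f' x) (at x)"
    and fb: "f b \<le> 0" and crossing: "\<And>x. x \<le> b \<Longrightarrow> f x = 0 \<Longrightarrow> f' x > 0" and ab: "a < b"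
  shows "f a < 0"
proof -
  have "((\<lambda>\<tau>. f (b - \<tau>)) has_real_derivative - f' (b - \<tau>)) (at \<tau>)" if "\<tau> \<ge> 0" for \<tau>
  proof -
    have "(f has_real_derivative f' (b - \<tau>)) (at (b - \<tau>))" using der that by simp
    moreover have "((\<lambda>\<tau>. b - \<tau>) has_real_derivative - 1) (at \<tau>)" by (auto intro!: derivative_eq_intros)
    ultimately show ?thesis using DERIV_chain2 by fastforce
  qed
  hence "f (b - (b - a)) < 0"
    using stays_negative_from_nonpos[of 0 "\<lambda>\<tau>. f (b - \<tau>)" "\<lambda>\<tau>. - f' (b - \<tau>)" "b - a"] fb crossing ab
    by auto
  thus ?thesis by simp
qed

text \<open>If f t \<ge> 0, then f is positive on (-\<infinity>, t) and decreasing near -\<infinity>, so it cannot tend to 0.\<close>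

lemma negative_if_tendsto_zero_at_bot:
  fixes f f' :: "real \<Rightarrow> real"
  assumes der: "\<And>x. x \<le> T \<Longrightarrow> (f has_real_derivative f' x) (at x)"
    and lim: "(f \<longlongrightarrow> 0) at_bot" and "\<epsilon> > 0"
    and decr: "\<And>x. x \<le> T \<Longrightarrow> 0 \<le> f x \<Longrightarrow> f x < \<epsilon> \<Longrightarrow> f' x < 0"
    and "t \<le> T"
  shows "f t < 0"
proof (rule ccontr)
  assume "\<not> f t < 0"
  have pos: "f s > 0" if "s < t" for s
  proof -
    have "- f s < 0"
    proof (rule stays_negative_backward[of t "\<lambda>x. - f x" "\<lambda>x. - f' x"])
      show "((\<lambda>x. - f x) has_real_derivative - f' x) (at x)" if "x \<le> t" for x
        using der[of x] that \<open>t \<le> T\<close> by (auto intro: derivative_eq_intros)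
      show "- f' x > 0" if "x \<le> t" "- f x = 0" for x
        using decr[of x] that \<open>t \<le> T\<close> \<open>\<epsilon> > 0\<close> by auto
    qed (use \<open>\<not> f t < 0\<close> \<open>s < t\<close> in auto)
    thus ?thesis by simp
  qed
  obtain T0 where T0: "\<And>s. s \<le> T0 \<Longrightarrow> \<bar>f s - 0\<bar> < \<epsilon>" using tendsto_at_botE[OF lim \<open>\<epsilon> > 0\<close>] by blast
  define t0 where "t0 = min T0 (t - 1)"
  have "f t0 \<le> f s" if "s \<le> t0" for s
  proof (rule DERIV_nonpos_imp_nonincreasing[OF that])
    fix x assume "s \<le> x" "x \<le> t0"
    hence "x \<le> T0" "x < t" by (auto simp: t0_def)
    thus "\<exists>y. DERIV f x :> y \<and> y \<le> 0"
      using der[of x] decr[of x] T0[of x] pos[of x] \<open>t \<le> T\<close> by (auto intro!: exI[of _ "f' x"])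
  qed
  hence "f t0 \<le> 0"
    by (intro tendsto_lowerbound[OF lim]) (auto simp: eventually_at_bot_linorder)
  moreover have "f t0 > 0" using pos by (simp add: t0_def)
  ultimately show False by simp
qed

lemma linear_growth:
  fixes f f' :: "real \<Rightarrow> real"
  assumes der: "\<And>x. x \<ge> T \<Longrightarrow> (f has_real_derivative f' x) (at x)"
    and ge: "\<And>x. x \<ge> T \<Longrightarrow> f' x \<ge> c" and "t \<ge> T"
  shows "f t \<ge> f T + c * (t - T)"
proof (cases "t = T")
  case False
  then obtain z where z: "T < z" "z < t" "f t - f T = (t - T) * f' z"
    using MVT2[of T t f f'] der \<open>t \<ge> T\<close> by auto
  have "(t - T) * f' z \<ge> (t - T) * c" using ge[of z] z by (intro mult_left_mono) auto
  thus ?thesis using z by (simp add: algebra_simps)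
qed simp

lemma unbounded_if_deriv_ge_pos:
  fixes f f' :: "real \<Rightarrow> real"
  assumes der: "\<And>x. x \<ge> T \<Longrightarrow> (f has_real_derivative f' x) (at x)"
    and ge: "\<And>x. x \<ge> T \<Longrightarrow> f' x \<ge> c" and "c > 0"
  shows "\<exists>t \<ge> T. f t > B"
proof (intro exI conjI)
  define t where "t = T + (\<bar>B - f T\<bar> + 1) / c"
  show "t \<ge> T" using \<open>c > 0\<close> by (simp add: t_def)
  have "f t \<ge> f T + c * (t - T)" by (rule linear_growth[OF der ge \<open>t \<ge> T\<close>])
  also have "c * (t - T) = \<bar>B - f T\<bar> + 1" using \<open>c > 0\<close> by (simp add: t_def)
  finally show "f t > B" by linarith
qed

lemma tendsto_shift_at_top_iff:
  fixes f :: "real \<Rightarrow> 'a::topological_space"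
  shows "((\<lambda>t. f (t + s)) \<longlongrightarrow> L) at_top \<longleftrightarrow> (f \<longlongrightarrow> L) at_top"
proof -
  have shift: "((\<lambda>t. g (t + c)) \<longlongrightarrow> L) at_top" if "(g \<longlongrightarrow> L) at_top" for g :: "real \<Rightarrow> 'a" and c :: real
    using filterlim_compose[OF that filterlim_tendsto_add_at_top[OF tendsto_const[of c] filterlim_ident]]
    by (simp add: add.commute)
  show ?thesis using shift[of "\<lambda>t. f (t + s)" "- s"] shift[of f s] by auto
qed

lemma tendsto_shift_at_bot_iff:
  fixes f :: "real \<Rightarrow> 'a::topological_space"
  shows "((\<lambda>t. f (t + s)) \<longlongrightarrow> L) at_bot \<longleftrightarrow> (f \<longlongrightarrow> L) at_bot"
proof -
  have "filterlim (\<lambda>t::real. t + c) at_bot at_bot" for c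
    unfolding filterlim_at_bot eventually_at_bot_linorder by (metis add_le_cancel_right diff_add_cancel)
  hence shift: "((\<lambda>t. g (t + c)) \<longlongrightarrow> L) at_bot" if "(g \<longlongrightarrow> L) at_bot" for g :: "real \<Rightarrow> 'a" and c :: real
    using filterlim_compose[OF that] by blast
  show ?thesis using shift[of "\<lambda>t. f (t + s)" "- s"] shift[of f s] by auto
qed

section \<open>Integrals and running means\<close>

lemma integral_has_real_derivative_at:
  fixes h :: "real \<Rightarrow> real"
  assumes "continuous_on UNIV h" "\<sigma> > 0"
  shows "((\<lambda>\<sigma>. integral {0..\<sigma>} h) has_real_derivative h \<sigma>) (at \<sigma>)"
proof -
  have "((\<lambda>\<sigma>. integral {0..\<sigma>} h) has_real_derivative h \<sigma>) (at \<sigma> within {0..\<sigma>+1})"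
    using assms by (intro integral_has_real_derivative continuous_on_subset[OF assms(1)]) auto
  moreover have "at \<sigma> within {0..\<sigma>+1} = at \<sigma>" using assms by (intro at_within_interior) simp
  ultimately show ?thesis by simp
qed

lemma abs_integral_le:
  fixes h :: "real \<Rightarrow> real"
  assumes "continuous_on UNIV h" "\<sigma> \<ge> 0" "\<And>x. x \<in> {0..\<sigma>} \<Longrightarrow> \<bar>h x\<bar> \<le> c"
  shows "\<bar>integral {0..\<sigma>} h\<bar> \<le> c * \<sigma>"
proof -
  have "h integrable_on {0..\<sigma>}"
    by (intro integrable_continuous_real continuous_on_subset[OF assms(1)]) simp
  hence "norm (integral {0..\<sigma>} h) \<le> integral {0..\<sigma>} (\<lambda>x. c)"
    by (rule integral_norm_bound_integral) (use assms in auto)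
  thus ?thesis using assms by (simp add: mult.commute)
qed

lemma has_integral_const_plus_exp:
  fixes M A C \<sigma> :: real
  assumes "M > 0" "\<sigma> \<ge> 0"
  shows "((\<lambda>x. A + C * exp (M * x)) has_integral (A * \<sigma> + C * exp (M * \<sigma>) / M - C / M)) {0..\<sigma>}"
proof -
  define F where "F x = A * x + C * exp (M * x) / M" for x
  have "((\<lambda>x. A + C * exp (M * x)) has_integral (F \<sigma> - F 0)) {0..\<sigma>}"
  proof (rule fundamental_theorem_of_calculus[OF assms(2)])
    fix x
    have "(F has_real_derivative A + C * exp (M * x)) (at x)"
      unfolding F_def[abs_def] using assms by (auto intro!: derivative_eq_intros)
    thus "(F has_vector_derivative A + C * exp (M * x)) (at x within {0..\<sigma>})"
      by (simp add: has_real_derivative_iff_has_vector_derivative has_vector_derivative_at_within)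
  qed
  thus ?thesis by (simp add: F_def)
qed

lemma abs_integral_le_exp_bound:
  fixes g :: "real \<Rightarrow> real"
  assumes "continuous_on UNIV g" "M > 0" "\<sigma> \<ge> 0" "C \<ge> 0"
    and "\<And>x. x \<in> {0..\<sigma>} \<Longrightarrow> \<bar>g x\<bar> \<le> A + C * exp (M * x)"
  shows "\<bar>integral {0..\<sigma>} g\<bar> \<le> A * \<sigma> + C * exp (M * \<sigma>) / M"
proof -
  have int: "((\<lambda>x. A + C * exp (M * x)) has_integral (A * \<sigma> + C * exp (M * \<sigma>) / M - C / M)) {0..\<sigma>}"
    using assms by (intro has_integral_const_plus_exp) auto
  have "g integrable_on {0..\<sigma>}" by (intro integrable_continuous_real continuous_on_subset[OF assms(1)]) simp
  hence "norm (integral {0..\<sigma>} g) \<le> integral {0..\<sigma>} (\<lambda>x. A + C * exp (M * x))"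
    using int assms(5) by (intro integral_norm_bound_integral) auto
  also have "\<dots> = A * \<sigma> + C * exp (M * \<sigma>) / M - C / M" using int by (rule integral_unique)
  moreover have "C / M \<ge> 0" using assms by simp
  ultimately show ?thesis by simp
qed

definition running_mean :: "(real \<Rightarrow> real) \<Rightarrow> real \<Rightarrow> real" where
  "running_mean h \<sigma> = (if \<sigma> \<le> 0 then 0 else integral {0..\<sigma>} h / \<sigma>)"

lemma abs_running_mean_le:
  assumes "continuous_on UNIV h" "\<And>x. x \<in> {0..\<sigma>} \<Longrightarrow> \<bar>h x\<bar> \<le> c" "c \<ge> 0"
  shows "\<bar>running_mean h \<sigma>\<bar> \<le> c"
proof (cases "\<sigma> \<le> 0")
  case False
  hence "\<bar>integral {0..\<sigma>} h\<bar> \<le> c * \<sigma>" using assms by (intro abs_integral_le) auto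
  thus ?thesis using False by (simp add: running_mean_def abs_divide divide_le_eq)
qed (use assms in \<open>simp add: running_mean_def\<close>)

lemma has_real_derivative_running_mean:
  assumes "continuous_on UNIV h" "\<sigma> > 0"
  shows "(running_mean h has_real_derivative (h \<sigma> - running_mean h \<sigma>) / \<sigma>) (at \<sigma>)"
proof -
  have "((\<lambda>\<sigma>. integral {0..\<sigma>} h / \<sigma>) has_real_derivative
      (h \<sigma> * \<sigma> - integral {0..\<sigma>} h * 1) / (\<sigma> * \<sigma>)) (at \<sigma>)"
    using assms by (intro DERIV_divide integral_has_real_derivative_at DERIV_ident) auto
  moreover have "(h \<sigma> * \<sigma> - integral {0..\<sigma>} h * 1) / (\<sigma> * \<sigma>) = (h \<sigma> - running_mean h \<sigma>) / \<sigma>"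
    using assms by (simp add: running_mean_def field_simps)
  ultimately have "((\<lambda>\<sigma>. integral {0..\<sigma>} h / \<sigma>) has_real_derivative (h \<sigma> - running_mean h \<sigma>) / \<sigma>) (at \<sigma>)"
    by simp
  thus ?thesis
    by (rule has_field_derivative_transform_within_open[where S = "{0<..}"]) (use assms in \<open>auto simp: running_mean_def\<close>)
qed

lemma continuous_on_running_mean:
  assumes h: "continuous_on UNIV h" "h 0 = 0"
  shows "continuous_on UNIV (running_mean h)"
proof -
  have "isCont (running_mean h) \<sigma>" for \<sigma>
  proof (cases \<sigma> "0::real" rule: linorder_cases)
    case less
    have "eventually (\<lambda>x. x \<in> {..<0}) (nhds \<sigma>)" using less by (intro eventually_nhds_in_open) auto
    hence "eventually (\<lambda>x. running_mean h x = 0) (nhds \<sigma>)"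
      by eventually_elim (simp add: running_mean_def)
    thus ?thesis by (simp add: isCont_cong)
  next
    case greater
    thus ?thesis using has_real_derivative_running_mean[OF h(1)] DERIV_isCont by blast
  next
    case equal
    have "\<exists>d>0. \<forall>x. dist x 0 < d \<longrightarrow> dist (running_mean h x) (running_mean h 0) < e" if "e > 0" for e
    proof -
      have "isCont h 0" "e/2 > 0" using h(1) \<open>e > 0\<close> by (auto simp: continuous_on_eq_continuous_at)
      then obtain d where d: "d > 0" "\<And>x. dist x 0 < d \<Longrightarrow> dist (h x) (h 0) < e/2"
        unfolding continuous_at_eps_delta by blast
      have hd: "\<bar>h y\<bar> \<le> e/2" if "\<bar>y\<bar> < d" for y
        using d(2)[of y] that h(2) by (simp add: dist_real_def)
      have "dist (running_mean h x) (running_mean h 0) < e" if "dist x 0 < d" for x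
      proof -
        have "\<bar>running_mean h x\<bar> \<le> e/2"
          using that \<open>e > 0\<close> by (intro abs_running_mean_le h(1) hd) (auto simp: dist_real_def)
        thus ?thesis using \<open>e > 0\<close> by (simp add: dist_real_def running_mean_def[of h 0])
      qed
      thus ?thesis using d(1) by blast
    qed
    thus ?thesis using equal by (simp add: continuous_at_eps_delta)
  qed
  thus ?thesis by (simp add: continuous_on_eq_continuous_at)
qed

lemma closed_bcontfun_weighted_ball:
  "closed {\<psi> :: real \<Rightarrow>\<^sub>C real. apply_bcontfun \<psi> 0 = 0 \<and> (\<forall>x\<in>A. \<bar>w x * apply_bcontfun \<psi> x\<bar> \<le> c)}"
proof -
  have eval: "continuous_on UNIV (\<lambda>\<psi>::real \<Rightarrow>\<^sub>C real. apply_bcontfun \<psi> x)" for x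
  proof (rule lipschitz_on_continuous_on)
    show "1-lipschitz_on UNIV (\<lambda>\<psi>::real \<Rightarrow>\<^sub>C real. apply_bcontfun \<psi> x)"
      by (rule lipschitz_onI) (auto simp: dist_bounded)
  qed
  have "{\<psi> :: real \<Rightarrow>\<^sub>C real. apply_bcontfun \<psi> 0 = 0 \<and> (\<forall>x\<in>A. \<bar>w x * apply_bcontfun \<psi> x\<bar> \<le> c)} =
      {\<psi>. apply_bcontfun \<psi> 0 = 0} \<inter> (\<Inter>x\<in>A. {\<psi>. \<bar>w x * apply_bcontfun \<psi> x\<bar> \<le> c})"
    by auto
  thus ?thesis
    by (auto intro!: closed_Int closed_INT closed_Collect_eq closed_Collect_le continuous_intros eval)
qed

section \<open>Half-angle parametrisation\<close>

definition sin_ht :: "real \<Rightarrow> real" where "sin_ht u = 2 * u / (1 + u\<^sup>2)"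

definition cos_ht :: "real \<Rightarrow> real" where "cos_ht u = (1 - u\<^sup>2) / (1 + u\<^sup>2)"

lemma one_plus_square_pos: "1 + (u::real)\<^sup>2 > 0"
  by (simp add: add_pos_nonneg)

lemma sin_2arctan: "sin (2 * arctan u) = sin_ht u"
proof -
  have "sin (2 * arctan u) = 2 * sin (arctan u) * cos (arctan u)" by (rule sin_double)
  also have "\<dots> = 2 * u / (sqrt (1 + u\<^sup>2))\<^sup>2" by (simp add: sin_arctan cos_arctan power2_eq_square)
  finally show ?thesis by (simp add: sin_ht_def add_pos_nonneg)
qed

lemma cos_2arctan: "cos (2 * arctan u) = cos_ht u"
proof -
  have "cos (2 * arctan u) = (cos (arctan u))\<^sup>2 - (sin (arctan u))\<^sup>2" by (rule cos_double)
  also have "\<dots> = 1 / (sqrt (1 + u\<^sup>2))\<^sup>2 - u\<^sup>2 / (sqrt (1 + u\<^sup>2))\<^sup>2"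
    by (simp add: sin_arctan cos_arctan power_divide)
  finally show ?thesis by (simp add: cos_ht_def add_pos_nonneg diff_divide_distrib)
qed

lemma abs_sin_ht_le_one: "\<bar>sin_ht u\<bar> \<le> 1"
  using abs_sin_le_one[of "2 * arctan u"] by (simp add: sin_2arctan)

lemma abs_cos_ht_le_one: "\<bar>cos_ht u\<bar> \<le> 1"
  using abs_cos_le_one[of "2 * arctan u"] by (simp add: cos_2arctan)

lemma sin_ht_pos: "u > 0 \<Longrightarrow> sin_ht u > 0"
  by (simp add: sin_ht_def add_pos_nonneg)

lemma sin_ht_nonneg: "u \<ge> 0 \<Longrightarrow> sin_ht u \<ge> 0"
  by (simp add: sin_ht_def add_pos_nonneg)

lemma sin_ht_le: "u \<ge> 0 \<Longrightarrow> sin_ht u \<le> 2 * u"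
  unfolding sin_ht_def using one_plus_square_pos[of u]
  by (simp add: divide_le_eq mult_le_cancel_left1)

lemma continuous_on_sin_ht: "continuous_on S sin_ht"
  unfolding sin_ht_def by (intro continuous_intros) (metis one_plus_square_pos less_irrefl)

lemma continuous_on_cos_ht: "continuous_on S cos_ht"
  unfolding cos_ht_def by (intro continuous_intros) (metis one_plus_square_pos less_irrefl)

lemma sin_ht_tendsto_zero: "(sin_ht \<longlongrightarrow> 0) at_top"
proof -
  have "((\<lambda>u. sin (2 * arctan u)) \<longlongrightarrow> sin (2 * (pi/2))) at_top"
    by (intro tendsto_intros tendsto_arctan_at_top)
  thus ?thesis by (simp add: sin_2arctan)
qed

lemma sin_ht_exp_tendsto_zero: "((\<lambda>t. sin_ht (exp t)) \<longlongrightarrow> 0) at_top"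
  using filterlim_compose[OF sin_ht_tendsto_zero exp_at_top] .

lemma cos_ge_7_8: "\<bar>x::real\<bar> \<le> 1/2 \<Longrightarrow> cos x \<ge> 7/8"
proof -
  assume "\<bar>x\<bar> \<le> 1/2"
  hence "x\<^sup>2 \<le> (1/2)\<^sup>2" using abs_le_square_iff[of x "1/2"] by simp
  moreover have "\<bar>sin (x/2)\<bar> \<le> \<bar>x/2\<bar>" by (rule abs_sin_x_le_abs_x)
  hence "(sin (x/2))\<^sup>2 \<le> (x/2)\<^sup>2" by (metis abs_le_square_iff)
  moreover have "cos x = 1 - 2 * (sin (x/2))\<^sup>2" using cos_double_sin[of "x/2"] by simp
  ultimately show ?thesis by (simp add: power_divide)
qed

lemma sin_nonneg_between_neg_2pi_neg_pi: "-2 * pi \<le> x \<Longrightarrow> x \<le> -pi \<Longrightarrow> sin x \<ge> 0"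
  using sin_ge_zero[of "x + 2 * pi"] by simp

lemma sin_le_neg_sin:
  assumes "0 \<le> \<eta>" "-pi + \<eta> \<le> x" "x \<le> -\<eta>"
  shows "sin \<eta> \<le> - sin x"
proof (cases "-x \<le> pi/2")
  case True
  hence "sin \<eta> \<le> sin (-x)" using assms by (intro sin_monotone_2pi_le) auto
  thus ?thesis by simp
next
  case False
  hence "sin \<eta> \<le> sin (pi - (-x))" using assms by (intro sin_monotone_2pi_le) auto
  thus ?thesis by simp
qed

section \<open>Reduction to a scalar equation\<close>

definition Theta_rhs :: "real \<Rightarrow> real \<Rightarrow> real \<Rightarrow> real \<Rightarrow> real \<Rightarrow> real" where
  "Theta_rhs a E lam u x =
     - 2 * a * sin_ht u * cos_ht u * cos x + 2 * a * E * (sin_ht u)\<^sup>2 * sin x - sin x + 2 * lam * sin_ht u"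

text \<open>The equation for \<Theta> along an orbit in the strip, reparametrised so that \<theta> = 2 arctan (exp t).\<close>

definition normal_sol :: "real \<Rightarrow> real \<Rightarrow> real \<Rightarrow> (real \<Rightarrow> real) \<Rightarrow> bool" where
  "normal_sol a E lam Th \<longleftrightarrow> (\<forall>t. (Th has_real_derivative Theta_rhs a E lam (exp t) (Th t)) (at t))"

lemma theta_field_2arctan: "theta_field a E lam (2 * arctan u, x) = (sin_ht u, Theta_rhs a E lam u x)"
  by (simp add: theta_field_def Theta_rhs_def sin_2arctan cos_2arctan)

lemma has_real_derivative_2arctan_exp:
  "((\<lambda>t. 2 * arctan (exp t)) has_real_derivative sin_ht (exp t)) (at t)"
proof -
  have "((\<lambda>t. 2 * arctan (exp t)) has_real_derivative 2 * (inverse (1 + (exp t)\<^sup>2) * exp t)) (at t)"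
    by (rule DERIV_cmult[OF DERIV_chain2[OF DERIV_arctan DERIV_exp]])
  thus ?thesis by (simp add: sin_ht_def field_simps)
qed

lemma strip_orbit_components:
  assumes "strip_orbit a E lam \<gamma>"
  shows "((\<lambda>t. fst (\<gamma> t)) has_real_derivative sin (fst (\<gamma> t))) (at t)"
    and "((\<lambda>t. snd (\<gamma> t)) has_real_derivative snd (theta_field a E lam (\<gamma> t))) (at t)"
proof -
  have d: "(\<gamma> has_derivative (\<lambda>h. h *\<^sub>R theta_field a E lam (\<gamma> t))) (at t)"
    using assms by (simp add: strip_orbit_def has_vector_derivative_def)
  show "((\<lambda>t. fst (\<gamma> t)) has_real_derivative sin (fst (\<gamma> t))) (at t)"
    using has_derivative_fst[OF d]
    by (simp add: has_field_derivative_def theta_field_def Let_def mult_commute_abs)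
  show "((\<lambda>t. snd (\<gamma> t)) has_real_derivative snd (theta_field a E lam (\<gamma> t))) (at t)"
    using has_derivative_snd[OF d] by (simp add: has_field_derivative_def mult_commute_abs)
qed

text \<open>tan (\<theta>/2) exp (-t) is a first integral of \<theta>' = sin \<theta>.\<close>

lemma strip_orbit_theta:
  assumes "strip_orbit a E lam \<gamma>"
  obtains C where "C > 0" "\<And>t. fst (\<gamma> t) = 2 * arctan (C * exp t)"
proof -
  define th where "th t = fst (\<gamma> t)" for t
  have rng: "0 < th t" "th t < pi" for t using assms by (auto simp: strip_orbit_def th_def)
  have dth: "(th has_real_derivative sin (th t)) (at t)" for t
    unfolding th_def using strip_orbit_components(1)[OF assms] .
  have cpos: "cos (th t / 2) > 0" for t using rng[of t] by (intro cos_gt_zero_pi) auto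
  define Q where "Q t = tan (th t / 2) * exp (- t)" for t
  have "(Q has_real_derivative 0) (at t)" for t
  proof -
    have "sin (th t) = 2 * sin (th t / 2) * cos (th t / 2)"
      using sin_double[of "th t / 2"] by simp
    hence "inverse ((cos (th t / 2))\<^sup>2) * (sin (th t) / 2) = tan (th t / 2)"
      using cpos[of t] by (simp add: tan_def power2_eq_square field_simps)
    moreover have "(Q has_real_derivative inverse ((cos (th t / 2))\<^sup>2) * (sin (th t) / 2) * exp (- t)
        - exp (- t) * tan (th t / 2)) (at t)"
      unfolding Q_def using cpos[of t]
      by (auto intro!: derivative_eq_intros dth simp: power2_eq_square)
    ultimately show ?thesis by (simp add: mult.commute)
  qed
  hence Qc: "Q t = Q 0" for t by (intro DERIV_isconst_all) auto
  have C: "Q 0 > 0" using rng[of 0] by (simp add: Q_def tan_gt_zero)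
  have "fst (\<gamma> t) = 2 * arctan (Q 0 * exp t)" for t
  proof -
    have "tan (th t / 2) = Q 0 * exp t" using Qc[of t] by (simp add: Q_def exp_minus field_simps)
    moreover have "arctan (tan (th t / 2)) = th t / 2" using rng[of t] by (intro arctan_tan) auto
    ultimately show ?thesis by (simp add: th_def)
  qed
  thus ?thesis using that C by blast
qed

lemma strip_orbit_normal_form:
  assumes "strip_orbit a E lam \<gamma>"
  obtains s Th where "\<And>t. \<gamma> t = (2 * arctan (exp (t - s)), Th (t - s))" "normal_sol a E lam Th"
proof -
  obtain C where C: "C > 0" "\<And>t. fst (\<gamma> t) = 2 * arctan (C * exp t)"
    using strip_orbit_theta[OF assms] by blast
  define s where "s = - ln C"
  define Th where "Th t = snd (\<gamma> (t + s))" for t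
  have fst: "fst (\<gamma> t) = 2 * arctan (exp (t - s))" for t
    using C by (simp add: s_def exp_add mult.commute)
  have form: "\<gamma> t = (2 * arctan (exp (t - s)), Th (t - s))" for t
    by (simp add: Th_def prod_eq_iff fst)
  have "(Th has_real_derivative Theta_rhs a E lam (exp t) (Th t)) (at t)" for t
  proof -
    have "((\<lambda>t. snd (\<gamma> t)) has_real_derivative snd (theta_field a E lam (\<gamma> (t + s)))) (at (t + s))"
      by (rule strip_orbit_components(2)[OF assms])
    moreover have "snd (theta_field a E lam (\<gamma> (t + s))) = Theta_rhs a E lam (exp t) (Th t)"
      using form[of "t + s"] by (simp add: theta_field_2arctan)
    moreover have "((\<lambda>t. t + s) has_real_derivative 1) (at t)" by (auto intro!: derivative_eq_intros)
    ultimately show ?thesis unfolding Th_def[abs_def] using DERIV_chain2 by fastforce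
  qed
  thus ?thesis using that form by (auto simp: normal_sol_def)
qed

lemma alpha_lim_normal_form:
  assumes "\<And>t. \<gamma> t = (2 * arctan (exp (t - s)), Th (t - s))"
  shows "alpha_lim \<gamma> (0, L) \<longleftrightarrow> (Th \<longlongrightarrow> L) at_bot"
proof -
  have "((\<lambda>t. exp (t - s)) \<longlongrightarrow> 0) at_bot"
    using tendsto_shift_at_bot_iff[of exp "- s"] exp_at_bot by simp
  hence "((\<lambda>t. 2 * arctan (exp (t - s))) \<longlongrightarrow> 2 * arctan 0) at_bot"
    by (intro tendsto_intros)
  moreover have "((\<lambda>t. Th (t - s)) \<longlongrightarrow> L) at_bot \<longleftrightarrow> (Th \<longlongrightarrow> L) at_bot"
    using tendsto_shift_at_bot_iff[of Th "- s"] by simp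
  ultimately show ?thesis
    unfolding alpha_lim_def assms[abs_def] using tendsto_Pair tendsto_snd by fastforce
qed

lemma omega_lim_normal_form:
  assumes "\<And>t. \<gamma> t = (2 * arctan (exp (t - s)), Th (t - s))"
  shows "omega_lim \<gamma> (pi, L) \<longleftrightarrow> (Th \<longlongrightarrow> L) at_top"
proof -
  have "filterlim (\<lambda>t. exp (t - s)) at_top at_top"
    using filterlim_compose[OF exp_at_top filterlim_tendsto_add_at_top[OF tendsto_const[of "- s"] filterlim_ident]]
    by simp
  hence "((\<lambda>t. 2 * arctan (exp (t - s))) \<longlongrightarrow> 2 * (pi / 2)) at_top"
    by (intro tendsto_intros filterlim_compose[OF tendsto_arctan_at_top])
  moreover have "((\<lambda>t. Th (t - s)) \<longlongrightarrow> L) at_top \<longleftrightarrow> (Th \<longlongrightarrow> L) at_top"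
    using tendsto_shift_at_top_iff[of Th "- s"] by simp
  ultimately show ?thesis
    unfolding omega_lim_def assms[abs_def] using tendsto_Pair tendsto_snd by fastforce
qed

section \<open>Estimates for the right-hand side\<close>

definition Theta_rhs_dx :: "real \<Rightarrow> real \<Rightarrow> real \<Rightarrow> real \<Rightarrow> real" where
  "Theta_rhs_dx a E u x = 2 * a * sin_ht u * cos_ht u * sin x + 2 * a * E * (sin_ht u)\<^sup>2 * cos x - cos x"

lemma has_real_derivative_Theta_rhs: "(Theta_rhs a E lam u has_real_derivative Theta_rhs_dx a E u x) (at x)"
  unfolding Theta_rhs_def Theta_rhs_dx_def by (auto intro!: derivative_eq_intros)

lemma Theta_rhs_diff_E: "Theta_rhs a E1 lam u x - Theta_rhs a E2 lam u x = 2 * a * (E1 - E2) * (sin_ht u)\<^sup>2 * sin x"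
  by (simp add: Theta_rhs_def algebra_simps)

locale theta_params =
  fixes a :: real
  assumes a_pos: "0 < a" and a_lt_half: "a < 1/2"
begin

lemma abs_two_a_term_le:
  assumes "0 \<le> s" "\<bar>c\<bar> \<le> 1" "\<bar>y\<bar> \<le> 1"
  shows "\<bar>2 * a * s * c * y\<bar> \<le> s"
proof -
  have "\<bar>c * y\<bar> \<le> 1" using assms by (simp add: abs_mult mult_le_one)
  hence "(2 * a) * (s * \<bar>c * y\<bar>) \<le> 1 * (s * 1)"
    using a_pos a_lt_half assms by (intro mult_mono mult_left_mono) auto
  thus ?thesis using a_pos assms by (simp add: abs_mult mult.assoc)
qed

lemma abs_two_a_E_term_le:
  assumes "0 \<le> E" "E \<le> 1" "u \<ge> 0" "\<bar>y\<bar> \<le> 1"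
  shows "\<bar>2 * a * E * (sin_ht u)\<^sup>2 * y\<bar> \<le> sin_ht u"
proof -
  have "\<bar>E * sin_ht u\<bar> \<le> 1" using assms abs_sin_ht_le_one[of u] by (simp add: abs_mult mult_le_one)
  hence "\<bar>2 * a * sin_ht u * (E * sin_ht u) * y\<bar> \<le> sin_ht u"
    using assms by (intro abs_two_a_term_le sin_ht_nonneg)
  thus ?thesis by (simp add: power2_eq_square algebra_simps)
qed

lemma Theta_rhs_lower_bound:
  assumes "u \<ge> 0" "0 \<le> E" "E \<le> 1"
  shows "Theta_rhs a E lam u x \<ge> - sin x - sin_ht u * (2 + 2 * \<bar>lam\<bar>)"
proof -
  define s where "s = sin_ht u"
  have s: "0 \<le> s" using sin_ht_nonneg[OF assms(1)] by (simp add: s_def)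
  have "\<bar>2 * a * s * cos_ht u * cos x\<bar> \<le> s"
    using s abs_cos_ht_le_one by (intro abs_two_a_term_le) auto
  moreover have "\<bar>2 * a * E * s\<^sup>2 * sin x\<bar> \<le> s"
    unfolding s_def using assms by (intro abs_two_a_E_term_le) auto
  moreover have "lam * s \<ge> - \<bar>lam\<bar> * s" using s by (intro mult_right_mono) auto
  ultimately show ?thesis unfolding Theta_rhs_def s_def[symmetric] by (simp add: abs_le_iff algebra_simps)
qed

lemma Theta_rhs_ge_half_sin:
  assumes "u \<ge> 0" "0 \<le> E" "E \<le> 1" "sin_ht u * (2 + 2 * \<bar>lam\<bar>) \<le> sin \<eta> / 2"
    and "0 \<le> \<eta>" "-pi + \<eta> \<le> x" "x \<le> -\<eta>"
  shows "Theta_rhs a E lam u x \<ge> sin \<eta> / 2"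
  using Theta_rhs_lower_bound[OF assms(1-3), where lam = lam and x = x] sin_le_neg_sin[OF assms(5-7)] assms(4)
  by linarith

lemma Theta_rhs_eventually_ge_half_sin:
  assumes "0 \<le> E" "E \<le> 1" "0 < \<eta>" "\<eta> \<le> 1/4"
  obtains T where "\<And>t x. t \<ge> T \<Longrightarrow> -pi + 1/4 \<le> x \<Longrightarrow> x \<le> -\<eta> \<Longrightarrow> Theta_rhs a E lam (exp t) x \<ge> sin \<eta> / 2"
proof -
  have "sin \<eta> > 0" using assms pi_gt3 by (intro sin_gt_zero) auto
  hence "sin \<eta> / (2 * (2 + 2 * \<bar>lam\<bar>)) > 0" by (simp add: add_pos_nonneg)
  then obtain T where T: "\<And>t. t \<ge> T \<Longrightarrow> \<bar>sin_ht (exp t) - 0\<bar> < sin \<eta> / (2 * (2 + 2 * \<bar>lam\<bar>))"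
    using tendsto_at_topE[OF sin_ht_exp_tendsto_zero] by blast
  have "Theta_rhs a E lam (exp t) x \<ge> sin \<eta> / 2" if "t \<ge> T" "-pi + 1/4 \<le> x" "x \<le> -\<eta>" for t x
    using that T[of t] assms sin_ht_pos[of "exp t"]
    by (intro Theta_rhs_ge_half_sin) (auto simp: field_simps add_pos_nonneg)
  thus ?thesis using that by blast
qed

lemma Theta_rhs_dx_close_to_neg_cos:
  assumes "u \<ge> 0" "0 \<le> E" "E \<le> 1"
  shows "\<bar>Theta_rhs_dx a E u x + cos x\<bar> \<le> 2 * sin_ht u"
proof -
  have "\<bar>2 * a * sin_ht u * cos_ht u * sin x\<bar> \<le> sin_ht u"
    using assms abs_cos_ht_le_one by (intro abs_two_a_term_le sin_ht_nonneg) auto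
  moreover have "\<bar>2 * a * E * (sin_ht u)\<^sup>2 * cos x\<bar> \<le> sin_ht u"
    using assms by (intro abs_two_a_E_term_le) auto
  ultimately show ?thesis unfolding Theta_rhs_dx_def by linarith
qed

lemma Theta_rhs_antimono_near_zero:
  assumes "u \<ge> 0" "0 \<le> E" "E \<le> 1" "sin_ht u \<le> 1/8" "-1/2 \<le> x1" "x1 \<le> x2" "x2 \<le> 1/2"
  shows "Theta_rhs a E lam u x1 \<ge> Theta_rhs a E lam u x2"
proof (cases "x1 = x2")
  case False
  then obtain z where z: "x1 < z" "z < x2"
      "Theta_rhs a E lam u x2 - Theta_rhs a E lam u x1 = (x2 - x1) * Theta_rhs_dx a E u z"
    using MVT2[of x1 x2 "Theta_rhs a E lam u"] has_real_derivative_Theta_rhs assms by force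
  have "cos z \<ge> 7/8" using z assms by (intro cos_ge_7_8) auto
  hence "Theta_rhs_dx a E u z \<le> 0"
    using Theta_rhs_dx_close_to_neg_cos[OF assms(1-3), of z] assms(4) by (simp add: abs_le_iff)
  hence "(x2 - x1) * Theta_rhs_dx a E u z \<le> 0" using z by (simp add: mult_nonneg_nonpos)
  thus ?thesis using z by simp
qed simp

lemma Theta_rhs_steep_near_neg_pi:
  assumes "u \<ge> 0" "0 \<le> E" "E \<le> 1" "sin_ht u \<le> 1/8" "-pi \<le> x1" "x1 \<le> x2" "x2 \<le> -pi + 1/2"
  shows "Theta_rhs a E lam u x2 - Theta_rhs a E lam u x1 \<ge> (x2 - x1) / 2"
proof (cases "x1 = x2")
  case False
  then obtain z where z: "x1 < z" "z < x2"
      "Theta_rhs a E lam u x2 - Theta_rhs a E lam u x1 = (x2 - x1) * Theta_rhs_dx a E u z"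
    using MVT2[of x1 x2 "Theta_rhs a E lam u"] has_real_derivative_Theta_rhs assms by force
  have "cos (z + pi) \<ge> 7/8" using z assms by (intro cos_ge_7_8) auto
  hence "Theta_rhs_dx a E u z \<ge> 1/2"
    using Theta_rhs_dx_close_to_neg_cos[OF assms(1-3), of z] assms(4) by (simp add: abs_le_iff)
  hence "(x2 - x1) * Theta_rhs_dx a E u z \<ge> (x2 - x1) * (1/2)" using z by (intro mult_left_mono) auto
  thus ?thesis using z by simp
qed simp

lemma Theta_rhs_gt_of_smaller_E:
  assumes "u > 0" "E' < E" "sin x < 0"
  shows "Theta_rhs a E' lam u x > Theta_rhs a E lam u x"
proof -
  have "2 * a * (E' - E) * (sin_ht u)\<^sup>2 < 0"
    using assms a_pos sin_ht_pos[of u] by (simp add: mult_pos_neg mult_neg_pos)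
  hence "2 * a * (E' - E) * (sin_ht u)\<^sup>2 * sin x > 0" using assms by (simp add: mult_neg_neg)
  thus ?thesis using Theta_rhs_diff_E[of a E' lam u x E] by linarith
qed

end

section \<open>Comparison with the connector\<close>

text \<open>The hypothesis \<lambda> \<le> -1 + a enters only through \<lambda> < -1/2.\<close>

locale theta_params_neg_lam = theta_params +
  fixes lam :: real
  assumes lam_lt: "lam < -1/2"
begin

lemma Theta_rhs_neg:
  assumes "u > 0" "0 \<le> E" "E \<le> 1" "sin x \<ge> 0"
  shows "Theta_rhs a E lam u x < 0"
proof -
  define s where "s = sin_ht u"
  have s: "0 < s" "s \<le> 1" using sin_ht_pos[OF assms(1)] abs_sin_ht_le_one[of u] by (auto simp: s_def)
  have "\<bar>2 * a * s * cos_ht u * cos x\<bar> \<le> s"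
    using s abs_cos_ht_le_one by (intro abs_two_a_term_le) auto
  moreover have "E * s\<^sup>2 \<le> 1" using assms s by (simp add: mult_le_one power_le_one)
  hence "(2 * a) * (E * s\<^sup>2) \<le> 1"
    using mult_le_one[of "2 * a" "E * s\<^sup>2"] assms a_pos a_lt_half by simp
  hence "2 * a * E * s\<^sup>2 * sin x \<le> sin x"
    using mult_left_le_one_le[OF assms(4), of "2 * a * (E * s\<^sup>2)"] a_pos assms s by (simp add: mult.assoc)
  moreover have "2 * lam * s < - 1 * s" using lam_lt s by (intro mult_strict_right_mono) auto
  ultimately show ?thesis unfolding Theta_rhs_def s_def[symmetric] by linarith
qed

lemma normal_sol_neg:
  assumes "0 \<le> E" "E \<le> 1" "normal_sol a E lam Th" "(Th \<longlongrightarrow> 0) at_bot"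
  shows "Th t < 0"
proof (rule negative_if_tendsto_zero_at_bot[where f = Th and \<epsilon> = pi and T = t
    and f' = "\<lambda>x. Theta_rhs a E lam (exp x) (Th x)"])
  show "(Th has_real_derivative Theta_rhs a E lam (exp x) (Th x)) (at x)" if "x \<le> t" for x
    using assms(3) by (simp add: normal_sol_def)
  show "Theta_rhs a E lam (exp x) (Th x) < 0" if "x \<le> t" "0 \<le> Th x" "Th x < pi" for x
    using that assms by (intro Theta_rhs_neg sin_ge_zero) auto
qed (use assms in auto)

lemma normal_sol_gt_neg_pi:
  assumes "0 \<le> E" "E \<le> 1" "normal_sol a E lam Th" "(Th \<longlongrightarrow> -pi) at_top"
  shows "Th t > -pi"
proof (rule ccontr)
  assume "\<not> Th t > -pi"
  have der: "(Th has_real_derivative Theta_rhs a E lam (exp x) (Th x)) (at x)" for x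
    using assms(3) by (simp add: normal_sol_def)
  have below: "Th s < -pi" if "s > t" for s
  proof -
    have "Th s + pi < 0"
    proof (rule stays_negative_from_nonpos[of t "\<lambda>s. Th s + pi"])
      show "((\<lambda>s. Th s + pi) has_real_derivative Theta_rhs a E lam (exp x) (Th x)) (at x)" for x
        using der[of x] by (auto intro: derivative_eq_intros)
      show "Theta_rhs a E lam (exp x) (Th x) < 0" if "Th x + pi = 0" for x
      proof -
        have "Th x = -pi" using that by simp
        thus ?thesis using assms by (intro Theta_rhs_neg) auto
      qed
    qed (use \<open>\<not> Th t > -pi\<close> that in auto)
    thus ?thesis by simp
  qed
  obtain T where T: "\<And>s. s \<ge> T \<Longrightarrow> \<bar>Th s - - pi\<bar> < pi" using tendsto_at_topE[OF assms(4), of pi] by auto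
  define t0 where "t0 = max T (t + 1)"
  have "Th s \<le> Th t0" if "s \<ge> t0" for s
  proof (rule DERIV_nonpos_imp_nonincreasing[OF that])
    fix x assume "t0 \<le> x" "x \<le> s"
    hence "-2 * pi \<le> Th x" "Th x \<le> -pi" using T[of x] below[of x] by (auto simp: t0_def)
    hence "Theta_rhs a E lam (exp x) (Th x) < 0"
      using assms by (intro Theta_rhs_neg sin_nonneg_between_neg_2pi_neg_pi) auto
    thus "\<exists>y. DERIV Th x :> y \<and> y \<le> 0" using der[of x] by force
  qed
  hence "-pi \<le> Th t0"
    by (intro tendsto_upperbound[OF assms(4)]) (auto simp: eventually_at_top_linorder)
  moreover have "t0 > t" by (simp add: t0_def)
  ultimately show False using below[of t0] by simp
qed

lemma normal_sol_above:
  assumes E: "0 \<le> E'" "E' < E" "E \<le> 1"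
    and sol1: "normal_sol a E' lam Th1" and sol2: "normal_sol a E lam Th2"
    and lim1: "(Th1 \<longlongrightarrow> 0) at_bot" and lim2: "(Th2 \<longlongrightarrow> 0) at_bot"
    and Th2_gt: "\<And>t. Th2 t > -pi"
  shows "Th1 t > Th2 t"
proof -
  define f where "f t = Th2 t - Th1 t" for t
  define f' where "f' t = Theta_rhs a E lam (exp t) (Th2 t) - Theta_rhs a E' lam (exp t) (Th1 t)" for t
  have der: "(f has_real_derivative f' t) (at t)" for t
    using sol1 sol2 unfolding f_def f'_def normal_sol_def by (auto intro: derivative_eq_intros)
  have Th2_neg: "Th2 t < 0" for t using normal_sol_neg[OF _ _ sol2 lim2] E by auto
  have rhs_E_gt: "Theta_rhs a E' lam (exp t) (Th2 t) > Theta_rhs a E lam (exp t) (Th2 t)" for t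
  proof -
    have "sin (- Th2 t) > 0" using Th2_neg[of t] Th2_gt[of t] by (intro sin_gt_zero) auto
    thus ?thesis using E by (intro Theta_rhs_gt_of_smaller_E) auto
  qed
  obtain T1 where T1: "\<And>t. t \<le> T1 \<Longrightarrow> \<bar>Th1 t - 0\<bar> < 1/2" using tendsto_at_botE[OF lim1, of "1/2"] by auto
  obtain T2 where T2: "\<And>t. t \<le> T2 \<Longrightarrow> \<bar>Th2 t - 0\<bar> < 1/2" using tendsto_at_botE[OF lim2, of "1/2"] by auto
  define T where "T = min (- ln 16) (min T1 T2)"
  \<comment> \<open>near -\<infinity> the rhs is antitone in \<Theta>, so f decreases wherever Th1 \<le> Th2\<close>
  have f_decr: "f' t < 0" if "t \<le> T" "0 \<le> f t" for t
  proof -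
    have "exp t \<le> exp (- ln 16)" using that by (simp add: T_def)
    hence "sin_ht (exp t) \<le> 1/8" using sin_ht_le[of "exp t"] by (simp add: exp_minus)
    hence "Theta_rhs a E' lam (exp t) (Th1 t) \<ge> Theta_rhs a E' lam (exp t) (Th2 t)"
      using T1[of t] T2[of t] that E by (intro Theta_rhs_antimono_near_zero) (auto simp: T_def f_def)
    thus ?thesis using rhs_E_gt[of t] by (simp add: f'_def)
  qed
  have "(f \<longlongrightarrow> 0) at_bot" unfolding f_def using tendsto_diff[OF lim2 lim1] by simp
  hence f_neg_bot: "f s < 0" if "s \<le> T" for s
    using negative_if_tendsto_zero_at_bot[of T f f' 1 s] der f_decr that by auto
  have "f t < 0"
  proof (rule stays_negative[of "min t T" f f'])
    show "f' x < 0" if "f x = 0" for x using rhs_E_gt[of x] that by (simp add: f_def f'_def)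
  qed (use der f_neg_bot in auto)
  thus ?thesis by (simp add: f_def)
qed

lemma normal_sol_frequently_above:
  assumes E: "0 \<le> E'" "E' < E" "E \<le> 1"
    and sol1: "normal_sol a E' lam Th1" and sol2: "normal_sol a E lam Th2"
    and above: "\<And>t. Th1 t > Th2 t" and Th1_neg: "\<And>t. Th1 t < 0" and Th2_gt: "\<And>t. Th2 t > -pi"
  shows "\<exists>t \<ge> T. Th1 t > -pi + 1/4"
proof (rule ccontr)
  assume "\<not> ?thesis"
  hence low: "Th1 t \<le> -pi + 1/4" if "t \<ge> T" for t using that by (meson not_le)
  obtain T' where T': "\<And>t. t \<ge> T' \<Longrightarrow> \<bar>sin_ht (exp t) - 0\<bar> < 1/8"
    using tendsto_at_topE[OF sin_ht_exp_tendsto_zero, of "1/8"] by auto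
  define T0 where "T0 = max T T'"
  define d where "d t = Th1 t - Th2 t" for t
  define D where "D t = Theta_rhs a E' lam (exp t) (Th1 t) - Theta_rhs a E lam (exp t) (Th2 t)" for t
  have der: "(d has_real_derivative D t) (at t)" for t
    using sol1 sol2 unfolding d_def D_def normal_sol_def by (auto intro: derivative_eq_intros)
  \<comment> \<open>near \<Theta> = -\<pi> the rhs is steep, so the gap d grows at least linearly in itself\<close>
  have D_ge: "D t \<ge> d t / 2" if "t \<ge> T0" for t
  proof -
    have "Theta_rhs a E' lam (exp t) (Th1 t) - Theta_rhs a E' lam (exp t) (Th2 t) \<ge> (Th1 t - Th2 t) / 2"
      using T'[of t] low[of t] above[of t] Th2_gt[of t] that E
      by (intro Theta_rhs_steep_near_neg_pi) (auto simp: T0_def)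
    moreover have "sin (- Th2 t) > 0" using above[of t] Th1_neg[of t] Th2_gt[of t] by (intro sin_gt_zero) auto
    hence "Theta_rhs a E' lam (exp t) (Th2 t) > Theta_rhs a E lam (exp t) (Th2 t)"
      using E by (intro Theta_rhs_gt_of_smaller_E) auto
    ultimately show ?thesis by (simp add: D_def d_def)
  qed
  have d_pos: "d t > 0" for t using above[of t] by (simp add: d_def)
  have d_mono: "d t \<ge> d T0" if "t \<ge> T0" for t
  proof -
    have "D x \<ge> 0" if "x \<ge> T0" for x using D_ge[OF that] d_pos[of x] by linarith
    thus ?thesis using linear_growth[of T0 d D 0 t] der that by auto
  qed
  have "D t \<ge> d T0 / 2" if "t \<ge> T0" for t using D_ge[OF that] d_mono[OF that] by linarith
  then obtain t where "d t > pi"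
    using unbounded_if_deriv_ge_pos[of T0 d D "d T0 / 2" pi] der d_pos[of T0] by auto
  thus False using Th1_neg[of t] Th2_gt[of t] by (simp add: d_def)
qed

lemma normal_sol_eventually_above_neg_pi:
  assumes E: "0 \<le> E" "E \<le> 1" and sol: "normal_sol a E lam Th"
    and freq: "\<And>T. \<exists>t \<ge> T. Th t > -pi + 1/4"
  obtains t3 where "\<And>t. t \<ge> t3 \<Longrightarrow> Th t > -pi + 1/4"
proof -
  obtain T where T: "\<And>t x. t \<ge> T \<Longrightarrow> -pi + 1/4 \<le> x \<Longrightarrow> x \<le> - (1/4) \<Longrightarrow>
      Theta_rhs a E lam (exp t) x \<ge> sin (1/4) / 2"
    using Theta_rhs_eventually_ge_half_sin[OF E, of "1/4"] by auto
  obtain t3 where t3: "t3 \<ge> T" "Th t3 > -pi + 1/4" using freq by blast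
  have "Th t > -pi + 1/4" if "t \<ge> t3" for t
  proof (rule stays_above[where f = Th and f' = "\<lambda>x. Theta_rhs a E lam (exp x) (Th x)", OF _ t3(2) _ that])
    show "(Th has_real_derivative Theta_rhs a E lam (exp x) (Th x)) (at x)" if "x \<ge> t3" for x
      using sol by (simp add: normal_sol_def)
    show "Theta_rhs a E lam (exp x) (Th x) > 0" if "x \<ge> t3" "Th x = -pi + 1/4" for x
      using T[of x "Th x"] that t3 pi_gt3 sin_gt_zero[of "1/4"] by auto
  qed
  thus ?thesis using that by blast
qed

lemma normal_sol_eventually_above:
  assumes E: "0 \<le> E" "E \<le> 1" and sol: "normal_sol a E lam Th"
    and neg: "\<And>t. Th t < 0" and low: "\<And>t. t \<ge> t3 \<Longrightarrow> Th t > -pi + 1/4"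
    and \<eta>: "0 < \<eta>" "\<eta> \<le> 1/4"
  shows "\<exists>T. \<forall>t \<ge> T. Th t > -\<eta>"
proof -
  define rhs where "rhs t = Theta_rhs a E lam (exp t) (Th t)" for t
  have der: "(Th has_real_derivative rhs t) (at t)" for t
    using sol by (simp add: normal_sol_def rhs_def)
  obtain T where T: "\<And>t x. t \<ge> T \<Longrightarrow> -pi + 1/4 \<le> x \<Longrightarrow> x \<le> -\<eta> \<Longrightarrow>
      Theta_rhs a E lam (exp t) x \<ge> sin \<eta> / 2"
    using Theta_rhs_eventually_ge_half_sin[OF E \<eta>] by blast
  define T0 where "T0 = max T t3"
  have rhs_pos: "rhs t \<ge> sin \<eta> / 2" if "t \<ge> T0" "Th t \<le> -\<eta>" for t
    using T[of t "Th t"] low[of t] that by (simp add: T0_def rhs_def)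
  have sin_pos: "sin \<eta> / 2 > 0" using \<eta> pi_gt3 by (simp add: sin_gt_zero)
  \<comment> \<open>below -\<eta> the solution would grow linearly, contradicting Th < 0\<close>
  have "\<exists>t5 \<ge> T0. Th t5 > -\<eta>"
  proof (rule ccontr)
    assume "\<not> ?thesis"
    hence "rhs t \<ge> sin \<eta> / 2" if "t \<ge> T0" for t using rhs_pos[OF that] that by force
    then obtain t where "Th t > 0" using unbounded_if_deriv_ge_pos[of T0 Th rhs "sin \<eta> / 2" 0] der sin_pos by auto
    thus False using neg[of t] by simp
  qed
  then obtain t5 where t5: "t5 \<ge> T0" "Th t5 > -\<eta>" by blast
  have "Th t > -\<eta>" if "t \<ge> t5" for t
  proof (rule stays_above[OF der t5(2) _ that])
    show "rhs x > 0" if "x \<ge> t5" "Th x = -\<eta>" for x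
      using rhs_pos[of x] that t5 sin_pos by simp
  qed
  thus ?thesis by blast
qed

lemma normal_sol_tendsto_zero_at_top:
  assumes E: "0 \<le> E" "E \<le> 1" and sol: "normal_sol a E lam Th"
    and neg: "\<And>t. Th t < 0" and freq: "\<And>T. \<exists>t \<ge> T. Th t > -pi + 1/4"
  shows "(Th \<longlongrightarrow> 0) at_top"
proof (rule tendstoI)
  fix e :: real assume "e > 0"
  obtain t3 where low: "\<And>t. t \<ge> t3 \<Longrightarrow> Th t > -pi + 1/4"
    using normal_sol_eventually_above_neg_pi[OF E sol freq] by blast
  define \<eta> where "\<eta> = min (e/2) (1/4)"
  have "0 < \<eta>" "\<eta> \<le> 1/4" using \<open>e > 0\<close> by (auto simp: \<eta>_def)
  then obtain T where "\<forall>t \<ge> T. Th t > -\<eta>" using normal_sol_eventually_above[OF E sol neg low] by blast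
  moreover have "\<eta> < e" using \<open>e > 0\<close> by (simp add: \<eta>_def)
  ultimately have "\<forall>t \<ge> T. dist (Th t) 0 < e" using neg by (auto simp: dist_real_def abs_if)
  thus "eventually (\<lambda>t. dist (Th t) 0 < e) at_top" unfolding eventually_at_top_linorder by blast
qed

lemma normal_sol_below_connector_tendsto_zero:
  assumes E: "0 \<le> E'" "E' < E" "E \<le> 1"
    and sol1: "normal_sol a E' lam Th1" and lim1: "(Th1 \<longlongrightarrow> 0) at_bot"
    and sol2: "normal_sol a E lam Th2" and lim2: "(Th2 \<longlongrightarrow> 0) at_bot" "(Th2 \<longlongrightarrow> -pi) at_top"
  shows "(Th1 \<longlongrightarrow> 0) at_top"
proof (rule normal_sol_tendsto_zero_at_top[OF _ _ sol1])
  have Th2_gt: "Th2 t > -pi" for t using normal_sol_gt_neg_pi[OF _ _ sol2 lim2(2)] E by auto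
  have above: "Th1 t > Th2 t" for t using normal_sol_above[OF E sol1 sol2 lim1 lim2(1) Th2_gt] .
  show neg: "Th1 t < 0" for t using normal_sol_neg[OF _ _ sol1 lim1] E by auto
  show "\<exists>t \<ge> T. Th1 t > -pi + 1/4" for T
    using normal_sol_frequently_above[OF E sol1 sol2 above neg Th2_gt] .
qed (use E in auto)

lemma omega_lim_unstable_orbit_below_connector:
  assumes E: "0 \<le> E'" "E' < E" "E \<le> 1" and "saddles_connector a E lam"
    and \<gamma>: "strip_orbit a E' lam \<gamma>" "alpha_lim \<gamma> (0, 0)"
  shows "omega_lim \<gamma> (pi, 0)" "\<not> omega_lim \<gamma> (pi, - pi)"
proof -
  obtain \<gamma>2 where \<gamma>2: "strip_orbit a E lam \<gamma>2" "alpha_lim \<gamma>2 (0, 0)" "omega_lim \<gamma>2 (pi, - pi)"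
    using assms(4) by (auto simp: saddles_connector_def)
  obtain s2 Th2 where form2: "\<And>t. \<gamma>2 t = (2 * arctan (exp (t - s2)), Th2 (t - s2))"
    and sol2: "normal_sol a E lam Th2" using strip_orbit_normal_form[OF \<gamma>2(1)] by blast
  obtain s1 Th1 where form1: "\<And>t. \<gamma> t = (2 * arctan (exp (t - s1)), Th1 (t - s1))"
    and sol1: "normal_sol a E' lam Th1" using strip_orbit_normal_form[OF \<gamma>(1)] by blast
  have "(Th1 \<longlongrightarrow> 0) at_top"
    using normal_sol_below_connector_tendsto_zero[OF E sol1 _ sol2] \<gamma>(2) \<gamma>2(2,3)
      alpha_lim_normal_form[OF form1] alpha_lim_normal_form[OF form2] omega_lim_normal_form[OF form2]
    by auto
  moreover have "\<not> (Th1 \<longlongrightarrow> - pi) at_top" using tendsto_unique[OF _ calculation] by force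
  ultimately show "omega_lim \<gamma> (pi, 0)" "\<not> omega_lim \<gamma> (pi, - pi)"
    using omega_lim_normal_form[OF form1] by simp_all
qed

end

section \<open>Existence of the unstable orbit\<close>

definition avg_rhs :: "real \<Rightarrow> real \<Rightarrow> real \<Rightarrow> real \<Rightarrow> real \<Rightarrow> real" where
  "avg_rhs a E lam u x = x + Theta_rhs a E lam u x"

lemma has_real_derivative_avg_rhs:
  "(avg_rhs a E lam u has_real_derivative 1 + Theta_rhs_dx a E u x) (at x)"
  unfolding avg_rhs_def using has_real_derivative_Theta_rhs by (auto intro!: derivative_eq_intros)

lemma avg_rhs_zero_zero: "avg_rhs a E lam 0 0 = 0"
  by (simp add: avg_rhs_def Theta_rhs_def sin_ht_def)

lemma continuous_on_avg_rhs: "continuous_on S g \<Longrightarrow> continuous_on S (\<lambda>x. avg_rhs a E lam x (g x))"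
  unfolding avg_rhs_def Theta_rhs_def
  by (intro continuous_intros continuous_on_compose2[OF continuous_on_sin_ht]
      continuous_on_compose2[OF continuous_on_cos_ht]) auto

text \<open>In the time \<sigma> = exp t a normal solution becomes \<Phi> with \<sigma> \<Phi>' = Theta_rhs \<sigma> \<Phi>, that is
  (\<sigma> \<Phi>)' = avg_rhs \<sigma> \<Phi>, so \<Phi> is the running mean of x \<mapsto> avg_rhs x (\<Phi> x).  The operator acts
  on \<psi> = exp (-M \<sigma>) \<Phi>; this weight makes it a contraction on the whole half-line.\<close>

definition avg_op :: "real \<Rightarrow> real \<Rightarrow> real \<Rightarrow> real \<Rightarrow> (real \<Rightarrow> real) \<Rightarrow> real \<Rightarrow> real" where
  "avg_op a E lam M \<psi> \<sigma> = exp (- (M * \<sigma>)) * running_mean (\<lambda>x. avg_rhs a E lam x (exp (M * x) * \<psi> x)) \<sigma>"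

lemma continuous_on_avg_op:
  assumes "continuous_on UNIV \<psi>" "\<psi> 0 = 0"
  shows "continuous_on UNIV (avg_op a E lam M \<psi>)"
  unfolding avg_op_def using assms
  by (intro continuous_intros continuous_on_running_mean continuous_on_avg_rhs)
    (auto simp: avg_rhs_zero_zero)

lemma exp_mult_avg_op:
  "exp (M * \<sigma>) * avg_op a E lam M \<psi> \<sigma> = running_mean (\<lambda>x. avg_rhs a E lam x (exp (M * x) * \<psi> x)) \<sigma>"
  by (simp add: avg_op_def exp_minus)

lemma normal_sol_of_self_averaging:
  assumes cont: "continuous_on UNIV \<Phi>"
    and mean_eq: "\<And>\<sigma>. \<sigma> > 0 \<Longrightarrow> running_mean (\<lambda>x. avg_rhs a E lam x (\<Phi> x)) \<sigma> = \<Phi> \<sigma>"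
  shows "normal_sol a E lam (\<lambda>t. \<Phi> (exp t))"
proof -
  define h where "h x = avg_rhs a E lam x (\<Phi> x)" for x
  have "continuous_on UNIV h" unfolding h_def by (rule continuous_on_avg_rhs[OF cont])
  have rm: "running_mean h \<sigma> = \<Phi> \<sigma>" if "\<sigma> > 0" for \<sigma>
    using mean_eq[OF that] by (simp add: h_def[abs_def])
  have "(\<Phi> has_real_derivative Theta_rhs a E lam \<sigma> (\<Phi> \<sigma>) / \<sigma>) (at \<sigma>)" if "\<sigma> > 0" for \<sigma>
  proof -
    have "(running_mean h has_real_derivative (h \<sigma> - running_mean h \<sigma>) / \<sigma>) (at \<sigma>)"
      by (rule has_real_derivative_running_mean[OF \<open>continuous_on UNIV h\<close> that])
    moreover have "(h \<sigma> - running_mean h \<sigma>) / \<sigma> = Theta_rhs a E lam \<sigma> (\<Phi> \<sigma>) / \<sigma>"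
      using rm[OF that] by (simp add: h_def avg_rhs_def)
    ultimately have "(running_mean h has_real_derivative Theta_rhs a E lam \<sigma> (\<Phi> \<sigma>) / \<sigma>) (at \<sigma>)"
      by simp
    thus ?thesis
      by (rule has_field_derivative_transform_within_open[where S = "{0<..}"]) (use that rm in simp_all)
  qed
  hence "((\<lambda>t. \<Phi> (exp t)) has_real_derivative Theta_rhs a E lam (exp t) (\<Phi> (exp t)) / exp t * exp t) (at t)"
    for t by (intro DERIV_chain2[OF _ DERIV_exp]) simp
  thus ?thesis by (simp add: normal_sol_def)
qed

context theta_params
begin

context
  fixes E lam :: real
  assumes E_nonneg: "0 \<le> E" and E_le_one: "E \<le> 1"
begin

lemma avg_rhs_lipschitz:
  assumes "u \<ge> 0"
  shows "\<bar>avg_rhs a E lam u x - avg_rhs a E lam u y\<bar> \<le> 4 * \<bar>x - y\<bar>"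
proof -
  have "\<bar>1 + Theta_rhs_dx a E u z\<bar> \<le> 4" for z
  proof -
    have "\<bar>Theta_rhs_dx a E u z + cos z\<bar> \<le> 2"
      using Theta_rhs_dx_close_to_neg_cos[OF assms E_nonneg E_le_one, of z] abs_sin_ht_le_one[of u] by linarith
    thus ?thesis using abs_cos_le_one[of z] by linarith
  qed
  thus ?thesis
    using field_differentiable_bound[of UNIV "avg_rhs a E lam u" "\<lambda>z. 1 + Theta_rhs_dx a E u z" 4 x y]
      has_real_derivative_avg_rhs by auto
qed

lemma avg_rhs_lipschitz_near_zero:
  assumes "u \<ge> 0" "u \<le> 1/32" "\<bar>x\<bar> \<le> 1/2" "\<bar>y\<bar> \<le> 1/2"
  shows "\<bar>avg_rhs a E lam u x - avg_rhs a E lam u y\<bar> \<le> 1/4 * \<bar>x - y\<bar>"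
proof -
  have "\<bar>1 + Theta_rhs_dx a E u z\<bar> \<le> 1/4" if "z \<in> {-1/2..1/2}" for z
  proof -
    have "cos z \<ge> 7/8" using that by (intro cos_ge_7_8) auto
    moreover have "\<bar>Theta_rhs_dx a E u z + cos z\<bar> \<le> 1/8"
      using Theta_rhs_dx_close_to_neg_cos[OF assms(1) E_nonneg E_le_one, of z] sin_ht_le[OF assms(1)] assms(2)
      by linarith
    ultimately show ?thesis using cos_le_one[of z] by linarith
  qed
  moreover have "x \<in> {-1/2..1/2}" "y \<in> {-1/2..1/2}" using assms(3,4) by auto
  moreover have "(avg_rhs a E lam u has_real_derivative 1 + Theta_rhs_dx a E u z) (at z within {-1/2..1/2})" for z
    by (rule has_field_derivative_at_within[OF has_real_derivative_avg_rhs])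
  ultimately show ?thesis
    using field_differentiable_bound[of "{-1/2..1/2}" "avg_rhs a E lam u" "\<lambda>z. 1 + Theta_rhs_dx a E u z" "1/4" x y]
    by auto
qed

lemma abs_avg_rhs_at_zero:
  assumes "u \<ge> 0"
  shows "\<bar>avg_rhs a E lam u 0\<bar> \<le> sin_ht u * (2 + 2 * \<bar>lam\<bar>)"
proof -
  have "\<bar>2 * a * sin_ht u * cos_ht u * 1\<bar> \<le> sin_ht u"
    using assms abs_cos_ht_le_one by (intro abs_two_a_term_le sin_ht_nonneg) auto
  moreover have "\<bar>lam * sin_ht u\<bar> \<le> \<bar>lam\<bar> * sin_ht u" using sin_ht_nonneg[OF assms] by (simp add: abs_mult)
  ultimately show ?thesis by (simp add: avg_rhs_def Theta_rhs_def abs_le_iff algebra_simps)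
qed

lemma abs_avg_rhs_le:
  assumes "u \<ge> 0"
  shows "\<bar>avg_rhs a E lam u x\<bar> \<le> (2 + 2 * \<bar>lam\<bar>) + 4 * \<bar>x\<bar>"
proof -
  have "sin_ht u * (2 + 2 * \<bar>lam\<bar>) \<le> 1 * (2 + 2 * \<bar>lam\<bar>)"
    using abs_sin_ht_le_one[of u] by (intro mult_right_mono) auto
  hence "\<bar>avg_rhs a E lam u 0\<bar> \<le> 2 + 2 * \<bar>lam\<bar>" using abs_avg_rhs_at_zero[OF assms] by simp
  moreover have "\<bar>avg_rhs a E lam u x - avg_rhs a E lam u 0\<bar> \<le> 4 * \<bar>x\<bar>"
    using avg_rhs_lipschitz[OF assms, of x 0] by simp
  ultimately show ?thesis using abs_triangle_ineq2[of "avg_rhs a E lam u x" "avg_rhs a E lam u 0"] by linarith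
qed

lemma abs_avg_rhs_le_quarter:
  assumes "u \<ge> 0" "u * (2 + 2 * \<bar>lam\<bar>) \<le> 1/16" "u \<le> 1/32" "\<bar>x\<bar> \<le> 1/2"
  shows "\<bar>avg_rhs a E lam u x\<bar> \<le> 1/4"
proof -
  have "sin_ht u * (2 + 2 * \<bar>lam\<bar>) \<le> (2 * u) * (2 + 2 * \<bar>lam\<bar>)"
    using sin_ht_le[OF assms(1)] by (intro mult_right_mono) auto
  hence "\<bar>avg_rhs a E lam u 0\<bar> \<le> 1/8" using abs_avg_rhs_at_zero[OF assms(1)] assms(2) by linarith
  thus ?thesis using avg_rhs_lipschitz_near_zero[OF assms(1,3,4), of 0] assms(4)
      abs_triangle_ineq2[of "avg_rhs a E lam u x" "avg_rhs a E lam u 0"] by simp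
qed

lemma abs_avg_op_le:
  assumes "continuous_on UNIV \<psi>" "\<And>x. \<bar>\<psi> x\<bar> \<le> N" "M \<ge> 0"
  shows "\<bar>avg_op a E lam M \<psi> \<sigma>\<bar> \<le> (2 + 2 * \<bar>lam\<bar>) + 4 * N"
proof (cases "\<sigma> \<le> 0")
  case True
  thus ?thesis using assms(2)[of 0] by (simp add: avg_op_def running_mean_def)
next
  case False
  define B where "B = 2 + 2 * \<bar>lam\<bar>"
  have "\<bar>avg_rhs a E lam x (exp (M * x) * \<psi> x)\<bar> \<le> B + 4 * (exp (M * \<sigma>) * N)" if "x \<in> {0..\<sigma>}" for x
  proof -
    have "\<bar>exp (M * x) * \<psi> x\<bar> \<le> exp (M * \<sigma>) * N"
      using that assms by (auto simp: abs_mult intro!: mult_mono)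
    thus ?thesis using abs_avg_rhs_le[of x "exp (M * x) * \<psi> x"] that
      by (simp add: B_def)
  qed
  hence "\<bar>running_mean (\<lambda>x. avg_rhs a E lam x (exp (M * x) * \<psi> x)) \<sigma>\<bar> \<le> B + 4 * (exp (M * \<sigma>) * N)"
    using assms(2)[of 0] by (intro abs_running_mean_le continuous_on_avg_rhs continuous_intros assms(1))
      (auto simp: B_def)
  hence "\<bar>avg_op a E lam M \<psi> \<sigma>\<bar> \<le> exp (- (M * \<sigma>)) * (B + 4 * (exp (M * \<sigma>) * N))"
    by (simp add: avg_op_def abs_mult mult_left_mono)
  also have "\<dots> = exp (- (M * \<sigma>)) * B + 4 * N" by (simp add: algebra_simps exp_minus)
  also have "\<dots> \<le> B + 4 * N" using False assms(3) by (simp add: B_def mult_left_le_one_le)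
  finally show ?thesis by (simp add: B_def)
qed

lemma abs_exp_mult_avg_op_le_quarter:
  assumes "continuous_on UNIV \<psi>" "\<sigma>1 * (2 + 2 * \<bar>lam\<bar>) \<le> 1/16" "\<sigma>1 \<le> 1/32"
    and "\<And>x. x \<in> {0..\<sigma>1} \<Longrightarrow> \<bar>exp (M * x) * \<psi> x\<bar> \<le> 1/2" "\<sigma> \<le> \<sigma>1"
  shows "\<bar>exp (M * \<sigma>) * avg_op a E lam M \<psi> \<sigma>\<bar> \<le> 1/4"
  unfolding exp_mult_avg_op
proof (rule abs_running_mean_le)
  show "\<bar>avg_rhs a E lam x (exp (M * x) * \<psi> x)\<bar> \<le> 1/4" if "x \<in> {0..\<sigma>}" for x
  proof (rule abs_avg_rhs_le_quarter)
    have "x * (2 + 2 * \<bar>lam\<bar>) \<le> \<sigma>1 * (2 + 2 * \<bar>lam\<bar>)" using that assms(5) by (intro mult_right_mono) auto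
    thus "x * (2 + 2 * \<bar>lam\<bar>) \<le> 1/16" using assms(2) by linarith
  qed (use that assms in auto)
qed (use assms in \<open>auto intro!: continuous_on_avg_rhs continuous_intros\<close>)

text \<open>The Lipschitz constant of avg_rhs is 1/4 on [0, \<sigma>1] and 4 beyond; the second term absorbs the
  latter once it is integrated against the weight.\<close>

lemma abs_avg_rhs_diff_le:
  assumes x: "0 \<le> x" "x \<le> \<sigma>" and \<sigma>1: "0 < \<sigma>1" "\<sigma>1 \<le> 1/32" and "M \<ge> 0" "\<delta> \<ge> 0"
    and small: "x \<le> \<sigma>1 \<Longrightarrow> \<bar>p\<bar> \<le> 1/2" "x \<le> \<sigma>1 \<Longrightarrow> \<bar>q\<bar> \<le> 1/2"
    and close: "\<bar>p - q\<bar> \<le> exp (M * x) * \<delta>"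
  shows "\<bar>avg_rhs a E lam x p - avg_rhs a E lam x q\<bar> \<le> \<delta> / 4 * exp (M * \<sigma>) + (4 * \<delta> * \<sigma> / \<sigma>1) * exp (M * x)"
proof -
  have nonneg: "\<delta> / 4 * exp (M * \<sigma>) \<ge> 0" "(4 * \<delta> * \<sigma> / \<sigma>1) * exp (M * x) \<ge> 0"
    using \<open>\<delta> \<ge> 0\<close> x \<sigma>1 by simp_all
  show ?thesis
  proof (cases "x \<le> \<sigma>1")
    case True
    have "\<bar>avg_rhs a E lam x p - avg_rhs a E lam x q\<bar> \<le> 1/4 * \<bar>p - q\<bar>"
      using x True \<sigma>1 small by (intro avg_rhs_lipschitz_near_zero) auto
    also have "\<dots> \<le> 1/4 * (exp (M * x) * \<delta>)" using close by simp
    also have "\<dots> \<le> \<delta> / 4 * exp (M * \<sigma>)"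
    proof -
      have "exp (M * x) \<le> exp (M * \<sigma>)" using x \<open>M \<ge> 0\<close> by (simp add: mult_left_mono)
      thus ?thesis using \<open>\<delta> \<ge> 0\<close> by (simp add: mult_left_mono mult.commute)
    qed
    finally show ?thesis using nonneg by linarith
  next
    case False
    have "\<bar>avg_rhs a E lam x p - avg_rhs a E lam x q\<bar> \<le> 4 * \<bar>p - q\<bar>"
      using x by (intro avg_rhs_lipschitz) auto
    also have "\<dots> \<le> (4 * \<delta>) * exp (M * x)" using close by (simp add: mult.commute)
    also have "4 * \<delta> \<le> 4 * \<delta> * \<sigma> / \<sigma>1"
      using False x \<sigma>1 \<open>\<delta> \<ge> 0\<close> by (simp add: le_divide_eq mult_left_mono)
    hence "(4 * \<delta>) * exp (M * x) \<le> (4 * \<delta> * \<sigma> / \<sigma>1) * exp (M * x)" by (rule mult_right_mono) simp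
    finally show ?thesis using nonneg by linarith
  qed
qed

lemma avg_op_contraction:
  assumes \<psi>: "continuous_on UNIV \<psi>1" "continuous_on UNIV \<psi>2"
    and \<sigma>1: "\<sigma>1 > 0" "\<sigma>1 \<le> 1/32" and M: "M = 16 / \<sigma>1"
    and small: "\<And>x. x \<in> {0..\<sigma>1} \<Longrightarrow> \<bar>exp (M * x) * \<psi>1 x\<bar> \<le> 1/2"
      "\<And>x. x \<in> {0..\<sigma>1} \<Longrightarrow> \<bar>exp (M * x) * \<psi>2 x\<bar> \<le> 1/2"
    and close: "\<And>x. \<bar>\<psi>1 x - \<psi>2 x\<bar> \<le> \<delta>"
  shows "\<bar>avg_op a E lam M \<psi>1 \<sigma> - avg_op a E lam M \<psi>2 \<sigma>\<bar> \<le> \<delta> / 2"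
proof (cases "\<sigma> \<le> 0")
  case True
  thus ?thesis using close[of 0] by (simp add: avg_op_def running_mean_def)
next
  case False
  have \<delta>: "\<delta> \<ge> 0" using close[of 0] by simp
  have "M > 0" using M \<sigma>1 by simp
  define h1 where "h1 x = avg_rhs a E lam x (exp (M * x) * \<psi>1 x)" for x
  define h2 where "h2 x = avg_rhs a E lam x (exp (M * x) * \<psi>2 x)" for x
  have cont: "continuous_on UNIV h1" "continuous_on UNIV h2"
    unfolding h1_def h2_def using \<psi> by (auto intro!: continuous_on_avg_rhs continuous_intros)
  have "\<bar>h1 x - h2 x\<bar> \<le> \<delta> / 4 * exp (M * \<sigma>) + (4 * \<delta> * \<sigma> / \<sigma>1) * exp (M * x)"
    if x: "x \<in> {0..\<sigma>}" for x
  proof -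
    have "\<bar>exp (M * x) * \<psi>1 x - exp (M * x) * \<psi>2 x\<bar> \<le> exp (M * x) * \<delta>"
      using close[of x] by (simp add: abs_mult right_diff_distrib[symmetric] mult_left_mono)
    thus ?thesis unfolding h1_def h2_def using x \<sigma>1 \<delta> \<open>M > 0\<close> small[of x]
      by (intro abs_avg_rhs_diff_le) auto
  qed
  hence "\<bar>integral {0..\<sigma>} (\<lambda>x. h1 x - h2 x)\<bar>
      \<le> \<delta> / 4 * exp (M * \<sigma>) * \<sigma> + (4 * \<delta> * \<sigma> / \<sigma>1) * exp (M * \<sigma>) / M"
    using False \<delta> \<sigma>1 \<open>M > 0\<close> by (intro abs_integral_le_exp_bound continuous_intros cont) auto
  also have "\<dots> = \<delta> * \<sigma> * exp (M * \<sigma>) / 2" using \<sigma>1 by (simp add: M field_simps)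
  also have "integral {0..\<sigma>} (\<lambda>x. h1 x - h2 x) = integral {0..\<sigma>} h1 - integral {0..\<sigma>} h2"
    by (rule integral_diff; rule integrable_continuous_real, rule continuous_on_subset[OF cont(1)] continuous_on_subset[OF cont(2)], simp)
  finally have bound: "\<bar>integral {0..\<sigma>} h1 - integral {0..\<sigma>} h2\<bar> \<le> \<delta> * \<sigma> * exp (M * \<sigma>) / 2" .
  have "avg_op a E lam M \<psi>1 \<sigma> - avg_op a E lam M \<psi>2 \<sigma>
      = exp (- (M * \<sigma>)) * (integral {0..\<sigma>} h1 - integral {0..\<sigma>} h2) / \<sigma>"
    using False by (simp add: avg_op_def running_mean_def h1_def[abs_def] h2_def[abs_def]
        right_diff_distrib diff_divide_distrib)
  hence "\<bar>avg_op a E lam M \<psi>1 \<sigma> - avg_op a E lam M \<psi>2 \<sigma>\<bar>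
      = exp (- (M * \<sigma>)) * \<bar>integral {0..\<sigma>} h1 - integral {0..\<sigma>} h2\<bar> / \<sigma>"
    using False by (simp add: abs_mult abs_divide)
  also have "\<dots> \<le> exp (- (M * \<sigma>)) * (\<delta> * \<sigma> * exp (M * \<sigma>) / 2) / \<sigma>"
    using bound False by (intro divide_right_mono mult_left_mono) auto
  also have "\<dots> = \<delta> / 2" using False by (simp add: exp_minus field_simps)
  finally show ?thesis .
qed

lemma avg_op_in_bcontfun:
  assumes "apply_bcontfun \<psi> 0 = 0" "M \<ge> 0"
  shows "avg_op a E lam M (apply_bcontfun \<psi>) \<in> bcontfun"
proof (rule bcontfun_normI)
  show "continuous_on UNIV (avg_op a E lam M (apply_bcontfun \<psi>))"
    using assms by (intro continuous_on_avg_op) auto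
  show "norm (avg_op a E lam M (apply_bcontfun \<psi>) x) \<le> (2 + 2 * \<bar>lam\<bar>) + 4 * norm \<psi>" for x
    using abs_avg_op_le[where \<psi> = "apply_bcontfun \<psi>" and N = "norm \<psi>" and M = M and \<sigma> = x]
      norm_bounded[of \<psi>] assms by auto
qed

lemma self_averaging_exists:
  obtains \<Phi> where "continuous_on UNIV \<Phi>" "\<Phi> 0 = 0"
    "\<And>\<sigma>. \<sigma> > 0 \<Longrightarrow> running_mean (\<lambda>x. avg_rhs a E lam x (\<Phi> x)) \<sigma> = \<Phi> \<sigma>"
proof -
  define \<sigma>1 where "\<sigma>1 = 1 / (16 * (2 + 2 * \<bar>lam\<bar>))"
  have \<sigma>1: "\<sigma>1 > 0" "\<sigma>1 * (2 + 2 * \<bar>lam\<bar>) \<le> 1/16" "\<sigma>1 \<le> 1/32"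
    by (auto simp: \<sigma>1_def field_simps add_pos_nonneg)
  define M where "M = 16 / \<sigma>1"
  have "M > 0" using \<sigma>1 by (simp add: M_def)
  define S where "S = {\<psi> :: real \<Rightarrow>\<^sub>C real. apply_bcontfun \<psi> 0 = 0 \<and>
      (\<forall>x\<in>{0..\<sigma>1}. \<bar>exp (M * x) * apply_bcontfun \<psi> x\<bar> \<le> 1/2)}"
  define T where "T \<psi> = Bcontfun (avg_op a E lam M (apply_bcontfun \<psi>))" for \<psi>
  have small: "\<And>x. x \<in> {0..\<sigma>1} \<Longrightarrow> \<bar>exp (M * x) * apply_bcontfun \<psi> x\<bar> \<le> 1/2" if "\<psi> \<in> S" for \<psi>
    using that by (auto simp: S_def)
  have T_apply: "apply_bcontfun (T \<psi>) = avg_op a E lam M (apply_bcontfun \<psi>)" if "\<psi> \<in> S" for \<psi>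
    unfolding T_def using that \<open>M > 0\<close> by (intro Bcontfun_inverse avg_op_in_bcontfun) (auto simp: S_def)
  have "T ` S \<subseteq> S"
  proof (intro subsetI, elim imageE)
    fix \<psi> \<phi> assume \<psi>: "\<psi> \<in> S" and "\<phi> = T \<psi>"
    hence \<phi>: "apply_bcontfun \<phi> = avg_op a E lam M (apply_bcontfun \<psi>)" using T_apply by simp
    have "\<bar>exp (M * x) * apply_bcontfun \<phi> x\<bar> \<le> 1/4" if "x \<in> {0..\<sigma>1}" for x
      unfolding \<phi> using that \<sigma>1 small[OF \<psi>] by (intro abs_exp_mult_avg_op_le_quarter) auto
    hence "\<forall>x\<in>{0..\<sigma>1}. \<bar>exp (M * x) * apply_bcontfun \<phi> x\<bar> \<le> 1/2" by force
    moreover have "apply_bcontfun \<phi> 0 = 0" by (simp add: \<phi> avg_op_def running_mean_def)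
    ultimately show "\<phi> \<in> S" by (simp add: S_def)
  qed
  moreover have "dist (T \<psi>1) (T \<psi>2) \<le> 1/2 * dist \<psi>1 \<psi>2" if "\<psi>1 \<in> S" "\<psi>2 \<in> S" for \<psi>1 \<psi>2
  proof (rule dist_bound)
    fix x
    have "\<bar>avg_op a E lam M (apply_bcontfun \<psi>1) x - avg_op a E lam M (apply_bcontfun \<psi>2) x\<bar> \<le> dist \<psi>1 \<psi>2 / 2"
      using \<sigma>1 small[OF that(1)] small[OF that(2)] dist_bounded[of \<psi>1 _ \<psi>2]
      by (intro avg_op_contraction[OF _ _ _ _ M_def]) (auto simp: dist_real_def)
    thus "dist (apply_bcontfun (T \<psi>1) x) (apply_bcontfun (T \<psi>2) x) \<le> 1/2 * dist \<psi>1 \<psi>2"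
      using that T_apply by (simp add: dist_real_def)
  qed
  moreover have "complete S" unfolding S_def complete_eq_closed by (rule closed_bcontfun_weighted_ball)
  moreover have "S \<noteq> {}" by (auto simp: S_def intro!: exI[of _ 0])
  ultimately have "\<exists>!\<psi>. \<psi> \<in> S \<and> T \<psi> = \<psi>" by (intro Banach_fix[of S "1/2" T]) auto
  then obtain \<psi> where \<psi>: "\<psi> \<in> S" "T \<psi> = \<psi>" by blast
  define \<Phi> where "\<Phi> x = exp (M * x) * apply_bcontfun \<psi> x" for x
  have "running_mean (\<lambda>x. avg_rhs a E lam x (\<Phi> x)) \<sigma> = \<Phi> \<sigma>" for \<sigma>
    using exp_mult_avg_op[of M \<sigma> a E lam "apply_bcontfun \<psi>"] T_apply[OF \<psi>(1)] \<psi>(2)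
    by (simp add: \<Phi>_def[abs_def])
  moreover have "continuous_on UNIV \<Phi>" unfolding \<Phi>_def by (intro continuous_intros) simp
  moreover have "\<Phi> 0 = 0" using \<psi>(1) by (simp add: \<Phi>_def S_def)
  ultimately show ?thesis using that by blast
qed

lemma unstable_orbit_exists:
  shows "\<exists>\<gamma>. strip_orbit a E lam \<gamma> \<and> alpha_lim \<gamma> (0, 0)"
proof -
  obtain \<Phi> where \<Phi>: "continuous_on UNIV \<Phi>" "\<Phi> 0 = 0"
    "\<And>\<sigma>. \<sigma> > 0 \<Longrightarrow> running_mean (\<lambda>x. avg_rhs a E lam x (\<Phi> x)) \<sigma> = \<Phi> \<sigma>"
    using self_averaging_exists by blast
  define \<gamma> where "\<gamma> t = (2 * arctan (exp t), \<Phi> (exp t))" for t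
  have sol: "normal_sol a E lam (\<lambda>t. \<Phi> (exp t))" by (rule normal_sol_of_self_averaging[OF \<Phi>(1,3)])
  have "strip_orbit a E lam \<gamma>"
    unfolding strip_orbit_def
  proof (intro allI conjI)
    fix t
    have "(\<gamma> has_vector_derivative (sin_ht (exp t), Theta_rhs a E lam (exp t) (\<Phi> (exp t)))) (at t)"
      unfolding \<gamma>_def[abs_def] using sol
      by (intro has_vector_derivative_Pair has_real_derivative_iff_has_vector_derivative[THEN iffD1]
          has_real_derivative_2arctan_exp) (simp add: normal_sol_def)
    thus "(\<gamma> has_vector_derivative theta_field a E lam (\<gamma> t)) (at t)"
      by (simp add: \<gamma>_def theta_field_2arctan)
    show "0 < fst (\<gamma> t)" "fst (\<gamma> t) < pi" using arctan_ubound[of "exp t"] by (simp_all add: \<gamma>_def)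
  qed
  moreover have "((\<lambda>t. \<Phi> (exp t)) \<longlongrightarrow> 0) at_bot"
    using continuous_on_tendsto_compose[OF \<Phi>(1) exp_at_bot] \<Phi>(2) by simp
  hence "alpha_lim \<gamma> (0, 0)" by (subst alpha_lim_normal_form[where s = 0]) (simp_all add: \<gamma>_def)
  ultimately show ?thesis by blast
qed

end

end

theorem proposition5:
  fixes a E lam :: real
  assumes "0 < a" "a < 1/2"
    and "0 < E" "E \<le> 1"
    and "lam \<le> -1 + a"
    and "saddles_connector a E lam"
  shows "\<forall>E'. 0 \<le> E' \<and> E' < E \<longrightarrow> corridor_K1 a E' lam 0"
proof (intro allI impI)
  fix E' assume E': "0 \<le> E' \<and> E' < E"
  interpret theta_params_neg_lam a lam using assms by unfold_locales auto
  have "\<exists>\<gamma>. strip_orbit a E' lam \<gamma> \<and> alpha_lim \<gamma> (0, 0)"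
    using unstable_orbit_exists[of E' lam] E' assms by auto
  moreover have "\<not> omega_lim \<gamma> (pi, - pi) \<and> omega_lim \<gamma> (pi, - 2 * pi * of_int 0)"
    if "strip_orbit a E' lam \<gamma> \<and> alpha_lim \<gamma> (0, 0)" for \<gamma>
    using omega_lim_unstable_orbit_below_connector[of E' E \<gamma>] E' assms that by auto
  ultimately show "corridor_K1 a E' lam 0" by (auto simp: corridor_K1_def)
qed

end
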